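(* Assume $b_1\ne b_2$, $c_1\ne c_2$. If $\check{f}$ has at least one root, then exactly one of the following is true. 1. $\check{f}$ has exactly two roots $x_0$ and $x_1$ at which it changes sign, and $\widehat{f}$ has no roots. The derivative $\check{f}'$ is nonzero at $x_0$ and $x_1$. 2. $\check{f}$ has exactly one root $x_0$ at which it does not change sign, and $\widehat{f}$ has no roots. The derivative $\check{f}'$ also has a root at $x_0$. 3. $\check{f}$ has exactly one root $x_0$ at which it changes sign, and $\widehat{f}$ also has exactly one root $x_1$ at which it changes sign. The derivatives $\check{f}'(x_0)$ and $\widehat{f}'(x_1)$ are nonzero.
   Context: A function $f:\mathbb{R}^+\to\mathbb{R}^+$ is called strongly hyperbolic if: (1) $\lim_{x\to 0+} f(x)=+\infty$ and $\lim_{x\to+\infty} f(x)=0$; (2) $f$ is strictly convex; (3) for each $b\in\mathbb{R}$, $\lim_{x\to+\infty} f(x+b)/f(x)=1$; (4) $f$ is differentiable; (5) $\ln|f'(x)|$ is strictly convex. Let $f_1,f_2$ be strongly hyperbolic functions, let $a_1,a_2>0$ and $b_1,b_2,c_1,c_2\in\mathbb{R}$. Define $\check{f}:(\max\{-b_1,-b_2\},+\infty)\to\mathbb{R}$, $\check{f}(x)=a_1f_1(x+b_1)+c_1-a_2f_1(x+b_2)-c_2$, and $\widehat{f}:(-\infty,\min\{-b_1,-b_2\})\to\mathbb{R}$, $\widehat{f}(x)=-a_1f_2(-x-b_1)+c_1+a_2f_2(-x-b_2)-c_2$. *)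

theory Defs
  imports "HOL-Analysis.Analysis"
begin

definition strictly_convex_on :: "real set \<Rightarrow> (real \<Rightarrow> real) \<Rightarrow> bool" where
  "strictly_convex_on S f \<longleftrightarrow> (\<forall>x\<in>S. \<forall>y\<in>S. \<forall>t::real. x \<noteq> y \<and> 0 < t \<and> t < 1 \<longrightarrow>
      f ((1 - t) * x + t * y) < (1 - t) * f x + t * f y)"

text \<open>Strongly hyperbolic functions f : (0,oo) -> (0,oo); values outside (0,oo) are irrelevant.\<close>
definition strongly_hyperbolic :: "(real \<Rightarrow> real) \<Rightarrow> bool" where
  "strongly_hyperbolic f \<longleftrightarrow>
     (\<forall>x>0. f x > 0) \<and>
     filterlim f at_top (at_right 0) \<and>
     (f \<longlongrightarrow> 0) at_top \<and>
     strictly_convex_on {0<..} f \<and>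
     (\<forall>b::real. ((\<lambda>x. f (x + b) / f x) \<longlongrightarrow> 1) at_top) \<and>
     (\<forall>x>0. f differentiable (at x)) \<and>
     strictly_convex_on {0<..} (\<lambda>x. ln \<bar>deriv f x\<bar>)"

definition fcheck :: "(real \<Rightarrow> real) \<Rightarrow> real \<Rightarrow> real \<Rightarrow> real \<Rightarrow> real \<Rightarrow> real \<Rightarrow> real \<Rightarrow> real \<Rightarrow> real" where
  "fcheck f1 a1 a2 b1 b2 c1 c2 x = a1 * f1 (x + b1) + c1 - a2 * f1 (x + b2) - c2"

definition fhat :: "(real \<Rightarrow> real) \<Rightarrow> real \<Rightarrow> real \<Rightarrow> real \<Rightarrow> real \<Rightarrow> real \<Rightarrow> real \<Rightarrow> real \<Rightarrow> real" where
  "fhat f2 a1 a2 b1 b2 c1 c2 x = - a1 * f2 (- x - b1) + c1 + a2 * f2 (- x - b2) - c2"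

definition fcheck_roots :: "(real \<Rightarrow> real) \<Rightarrow> real \<Rightarrow> real \<Rightarrow> real \<Rightarrow> real \<Rightarrow> real \<Rightarrow> real \<Rightarrow> real set" where
  "fcheck_roots f1 a1 a2 b1 b2 c1 c2 =
     {x. max (- b1) (- b2) < x \<and> fcheck f1 a1 a2 b1 b2 c1 c2 x = 0}"

definition fhat_roots :: "(real \<Rightarrow> real) \<Rightarrow> real \<Rightarrow> real \<Rightarrow> real \<Rightarrow> real \<Rightarrow> real \<Rightarrow> real \<Rightarrow> real set" where
  "fhat_roots f2 a1 a2 b1 b2 c1 c2 =
     {x. x < min (- b1) (- b2) \<and> fhat f2 a1 a2 b1 b2 c1 c2 x = 0}"

definition changes_sign_at :: "(real \<Rightarrow> real) \<Rightarrow> real \<Rightarrow> bool" where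
  "changes_sign_at g x \<longleftrightarrow> (\<exists>e>0.
     ((\<forall>y\<in>{x - e<..<x}. g y < 0) \<and> (\<forall>y\<in>{x<..<x + e}. g y > 0)) \<or>
     ((\<forall>y\<in>{x - e<..<x}. g y > 0) \<and> (\<forall>y\<in>{x<..<x + e}. g y < 0)))"

definition keeps_sign_at :: "(real \<Rightarrow> real) \<Rightarrow> real \<Rightarrow> bool" where
  "keeps_sign_at g x \<longleftrightarrow> (\<exists>e>0.
     (\<forall>y\<in>{x - e<..<x + e} - {x}. g y > 0) \<or>
     (\<forall>y\<in>{x - e<..<x + e} - {x}. g y < 0))"

end

theory Submission
  imports Defs
begin

(* For b2 < b1, fcheck is g(x) = A f(x + p) - B f(x + q) + c on (-q, oo) with q < p, A, B > 0
   and c = c1 - c2, and fhat(x) = g(-x) for another function g of this kind with the same c;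
   for b1 < b2, exchanging the indices only flips the sign of both functions.
   Strict convexity of ln |f'| makes |f'(x + p)| / |f'(x + q)| strictly increasing, so g'
   changes sign at most once, from + to -. As g -> -oo at -q and g -> c at oo, g has exactly
   one zero, a simple one, if c > 0. If c < 0, g has either two simple zeros, or a single
   zero at its maximum, or none; and none at all if A <= B, since then g < 0. Hence if
   c1 < c2, a zero of fcheck forces a2 < a1, which leaves fhat without zeros; if c1 > c2,
   both functions have exactly one simple zero. *)

lemma strictly_convex_on_imp_convex_on:
  assumes "strictly_convex_on S f" "convex S"
  shows "convex_on S f"
proof (rule convex_onI[OF _ assms(2)])
  fix t x y :: real assume "0 < t" "t < 1" "x \<in> S" "y \<in> S"
  then have "f ((1 - t) * x + t * y) \<le> (1 - t) * f x + t * f y"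
    using assms(1) unfolding strictly_convex_on_def
    by (cases "x = y") (simp add: algebra_simps, meson less_imp_le)
  then show "f ((1 - t) *\<^sub>R x + t *\<^sub>R y) \<le> (1 - t) * f x + t * f y"
    by simp
qed

lemma strictly_convex_on_slope_less:
  assumes "strictly_convex_on S f" "a \<in> S" "c \<in> S" "a < b" "b < c"
  shows "(f b - f a) / (b - a) < (f c - f a) / (c - a)"
    and "(f c - f a) / (c - a) < (f c - f b) / (c - b)"
proof -
  define t where "t = (b - a) / (c - a)"
  have t: "0 < t" "t < 1" "t * (c - a) = b - a"
    using assms(4,5) by (auto simp: t_def field_simps)
  then have b: "b = (1 - t) * a + t * c"
    by (simp add: algebra_simps)
  have "f b < (1 - t) * f a + t * f c"
    using assms(1-5) t unfolding strictly_convex_on_def b by auto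
  then have "f b * (c - a) < ((1 - t) * f a + t * f c) * (c - a)"
    using assms(4,5) by (intro mult_strict_right_mono) auto
  also have "\<dots> = ((1 - t) * (c - a)) * f a + (t * (c - a)) * f c"
    by (simp add: algebra_simps)
  also have "(1 - t) * (c - a) = c - b"
    using t(3) by (auto simp: algebra_simps)
  also note t(3)
  finally have "f b * (c - a) < (c - b) * f a + (b - a) * f c" .
  then show "(f b - f a) / (b - a) < (f c - f a) / (c - a)"
    and "(f c - f a) / (c - a) < (f c - f b) / (c - b)"
    using assms(4,5) by (simp_all add: field_simps)
qed

lemma strictly_convex_on_shifted_difference_less:
  assumes "strictly_convex_on S f" "x + q \<in> S" "y + p \<in> S" "q < p" "x < y"
  shows "f (x + p) - f (x + q) < f (y + p) - f (y + q)"
proof -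
  have "(f (x + p) - f (x + q)) / (p - q) < (f (y + p) - f (x + q)) / (y + p - (x + q))"
    using strictly_convex_on_slope_less(1)[OF assms(1-3), of "x + p"] assms(4,5) by simp
  also have "\<dots> < (f (y + p) - f (y + q)) / (p - q)"
    using strictly_convex_on_slope_less(2)[OF assms(1-3), of "y + q"] assms(4,5) by simp
  finally show ?thesis
    using assms(4) by (simp add: divide_strict_right_mono_neg divide_less_cancel)
qed

lemma strongly_hyperbolic_pos: "strongly_hyperbolic f \<Longrightarrow> 0 < x \<Longrightarrow> 0 < f x"
  unfolding strongly_hyperbolic_def by blast

lemma strongly_hyperbolic_DERIV:
  "strongly_hyperbolic f \<Longrightarrow> 0 < x \<Longrightarrow> (f has_real_derivative deriv f x) (at x)"
  unfolding strongly_hyperbolic_def by (simp add: DERIV_deriv_iff_real_differentiable)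

lemma strongly_hyperbolic_deriv_neg:
  assumes f: "strongly_hyperbolic f" and x: "0 < x"
  shows "deriv f x < 0"
proof (rule ccontr)
  assume "\<not> deriv f x < 0"
  have "convex_on {0<..} f"
    using f by (intro strictly_convex_on_imp_convex_on) (auto simp: strongly_hyperbolic_def)
  then have tangent: "deriv f x * (y - x) \<le> f y - f x" if "0 < y" for y
    by (rule convex_on_imp_above_tangent)
      (use x that strongly_hyperbolic_DERIV[OF f x]
        in \<open>auto simp: interior_open intro: has_field_derivative_at_within\<close>)
  have "eventually (\<lambda>y. f y < f x) at_top"
    using f strongly_hyperbolic_pos[OF f x]
    by (intro order_tendstoD(2)) (auto simp: strongly_hyperbolic_def)
  then have "eventually (\<lambda>y. f y < f x \<and> x < y) at_top"
    using eventually_gt_at_top by (rule eventually_conj)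
  then obtain y where "f y < f x" "x < y"
    using eventually_happens'[OF trivial_limit_at_top_linorder] by blast
  then show False
    using tangent[of y] x mult_nonneg_nonneg[of "deriv f x" "y - x"] \<open>\<not> deriv f x < 0\<close>
    by linarith
qed

lemma strongly_hyperbolic_decreasing:
  assumes f: "strongly_hyperbolic f" and "0 < x" "x < y"
  shows "f y < f x"
proof (rule DERIV_neg_imp_decreasing_open[OF assms(3)])
  show "\<exists>d. (f has_real_derivative d) (at z) \<and> d < 0" if "x < z" "z < y" for z
    using that assms strongly_hyperbolic_DERIV[OF f] strongly_hyperbolic_deriv_neg[OF f]
    by (intro exI[of _ "deriv f z"]) auto
  show "continuous_on {x..y} f"
    by (intro continuous_at_imp_continuous_on ballI DERIV_isCont[OF strongly_hyperbolic_DERIV[OF f]])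
      (use assms in auto)
qed

lemma zeros_reflect:
  fixes G :: "real \<Rightarrow> real"
  shows "{x \<in> {..< -r}. G (- x) = 0} = uminus ` {x \<in> {r<..}. G x = 0}"
proof (intro set_eqI iffI)
  fix x assume "x \<in> {x \<in> {..< -r}. G (- x) = 0}"
  then show "x \<in> uminus ` {x \<in> {r<..}. G x = 0}"
    by (intro image_eqI[of x uminus "- x"]) auto
qed auto

definition simple_zero :: "(real \<Rightarrow> real) \<Rightarrow> real \<Rightarrow> bool" where
  "simple_zero G x \<longleftrightarrow> G x = 0 \<and> (\<exists>D. (G has_real_derivative D) (at x) \<and> D \<noteq> 0)"

definition touching_zero :: "(real \<Rightarrow> real) \<Rightarrow> real \<Rightarrow> bool" where
  "touching_zero G x \<longleftrightarrow> G x = 0 \<and> keeps_sign_at G x \<and> (G has_real_derivative 0) (at x)"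

lemma changes_sign_at_uminus: "changes_sign_at (\<lambda>y. - G y) x \<longleftrightarrow> changes_sign_at G x"
  unfolding changes_sign_at_def by auto

lemma keeps_sign_at_uminus: "keeps_sign_at (\<lambda>y. - G y) x \<longleftrightarrow> keeps_sign_at G x"
  unfolding keeps_sign_at_def by auto

lemma changes_sign_at_if_DERIV_pos:
  assumes "(G has_real_derivative D) (at x)" "0 < D" "G x = 0"
  shows "changes_sign_at G x"
proof -
  obtain d1 where d1: "0 < d1" "\<And>h. 0 < h \<Longrightarrow> h < d1 \<Longrightarrow> G x < G (x + h)"
    using DERIV_pos_inc_right[OF assms(1,2)] by blast
  obtain d2 where d2: "0 < d2" "\<And>h. 0 < h \<Longrightarrow> h < d2 \<Longrightarrow> G (x - h) < G x"
    using DERIV_pos_inc_left[OF assms(1,2)] by blast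
  have "\<forall>y\<in>{x - min d1 d2<..<x}. G y < 0"
    using d2(2)[of "x - y" for y] assms(3) by auto
  moreover have "\<forall>y\<in>{x<..<x + min d1 d2}. G y > 0"
    using d1(2)[of "y - x" for y] assms(3) by auto
  ultimately show ?thesis
    unfolding changes_sign_at_def using d1(1) d2(1) by (intro exI[of _ "min d1 d2"]) auto
qed

lemma simple_zero_changes_sign:
  assumes "simple_zero G x" shows "changes_sign_at G x"
proof -
  obtain D where D: "(G has_real_derivative D) (at x)" "D \<noteq> 0" and "G x = 0"
    using assms unfolding simple_zero_def by blast
  show ?thesis
  proof (cases "0 < D")
    case True
    with D(1) \<open>G x = 0\<close> show ?thesis
      using changes_sign_at_if_DERIV_pos by blast
  next
    case False
    with D(2) have "changes_sign_at (\<lambda>y. - G y) x"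
      using DERIV_minus[OF D(1)] \<open>G x = 0\<close> by (intro changes_sign_at_if_DERIV_pos) auto
    then show ?thesis
      by (simp add: changes_sign_at_uminus)
  qed
qed

lemma simple_zero_deriv_nonzero: "simple_zero G x \<Longrightarrow> deriv G x \<noteq> 0"
  unfolding simple_zero_def using DERIV_imp_deriv by metis

lemma touching_zero_deriv_eq_0: "touching_zero G x \<Longrightarrow> deriv G x = 0"
  unfolding touching_zero_def using DERIV_imp_deriv by metis

lemma simple_zero_uminus:
  assumes "simple_zero G x" shows "simple_zero (\<lambda>y. - G y) x"
proof -
  obtain D where "G x = 0" "(G has_real_derivative D) (at x)" "D \<noteq> 0"
    using assms unfolding simple_zero_def by blast
  then show ?thesis
    unfolding simple_zero_def by (intro conjI exI[of _ "- D"]) (auto intro: DERIV_minus)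
qed

lemma touching_zero_uminus: "touching_zero G x \<Longrightarrow> touching_zero (\<lambda>y. - G y) x"
  unfolding touching_zero_def keeps_sign_at_uminus using DERIV_minus[of G 0 x] by simp

lemma simple_zero_reflect:
  assumes "simple_zero G x" shows "simple_zero (\<lambda>y. G (- y)) (- x)"
proof -
  obtain D where "G x = 0" "(G has_real_derivative D) (at x)" "D \<noteq> 0"
    using assms unfolding simple_zero_def by blast
  then show ?thesis
    unfolding simple_zero_def using DERIV_mirror[where f=G and x="- x" and y=D]
    by (intro conjI exI[of _ "- D"]) auto
qed

lemma touching_zero_if_strict_local_max:
  assumes "(G has_real_derivative D) (at m)" "G m = 0" "0 < e"
    and "\<And>y. \<bar>y - m\<bar> < e \<Longrightarrow> y \<noteq> m \<Longrightarrow> G y < G m"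
  shows "touching_zero G m"
proof -
  have "D = 0"
  proof (rule DERIV_local_max[OF assms(1,3)])
    show "\<forall>y. \<bar>m - y\<bar> < e \<longrightarrow> G y \<le> G m"
      using assms(4) by (metis abs_minus_commute order.refl less_imp_le)
  qed
  moreover have "keeps_sign_at G m"
    unfolding keeps_sign_at_def using assms(2-4) by (intro exI[of _ e]) (auto simp: abs_less_iff)
  ultimately show ?thesis
    using assms(1,2) by (simp add: touching_zero_def)
qed

lemma mult_le_mult_iff_ln_diff_le:
  fixes a b u v :: real
  assumes "0 < a" "0 < b" "0 < u" "0 < v"
  shows "a * u \<le> b * v \<longleftrightarrow> ln a - ln b \<le> ln v - ln u"
proof -
  have "a * u \<le> b * v \<longleftrightarrow> ln (a * u) \<le> ln (b * v)"
    using assms by simp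
  also have "\<dots> \<longleftrightarrow> ln a - ln b \<le> ln v - ln u"
    using assms by (simp add: ln_mult algebra_simps)
  finally show ?thesis .
qed

lemma mult_less_mult_iff_ln_diff_less:
  fixes a b u v :: real
  assumes "0 < a" "0 < b" "0 < u" "0 < v"
  shows "a * u < b * v \<longleftrightarrow> ln a - ln b < ln v - ln u"
  using mult_le_mult_iff_ln_diff_le[OF assms(2,1,4,3)] by linarith

locale hyperbolic_difference =
  fixes f :: "real \<Rightarrow> real" and A B p q c :: real
  assumes hyperbolic: "strongly_hyperbolic f"
    and shift_less: "q < p" and A_pos: "0 < A" and B_pos: "0 < B"
begin

definition g :: "real \<Rightarrow> real" where
  "g x = A * f (x + p) - B * f (x + q) + c"

definition g' :: "real \<Rightarrow> real" where
  "g' x = A * deriv f (x + p) - B * deriv f (x + q)"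

lemma has_real_derivative_g:
  assumes "-q < x" shows "(g has_real_derivative g' x) (at x)"
proof -
  have shifted: "((\<lambda>y. f (y + r)) has_real_derivative deriv f (x + r)) (at x)" if "q \<le> r" for r
    using strongly_hyperbolic_DERIV[OF hyperbolic, of "x + r"] assms that by (simp add: DERIV_shift)
  show ?thesis
    unfolding g_def[abs_def] g'_def
    by (rule derivative_eq_intros shifted refl | use shift_less in simp)+
qed

lemma continuous_on_g: "-q < a \<Longrightarrow> continuous_on {a..b} g"
  by (intro continuous_at_imp_continuous_on ballI DERIV_isCont[OF has_real_derivative_g]) auto

lemma g_less_if_g'_pos:
  assumes "-q < x" "x < y" "\<And>z. x < z \<Longrightarrow> z < y \<Longrightarrow> 0 < g' z"
  shows "g x < g y"
proof (rule DERIV_pos_imp_increasing_open[OF assms(2) _ continuous_on_g[OF assms(1)]])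
  fix z assume "x < z" "z < y"
  then show "\<exists>d. (g has_real_derivative d) (at z) \<and> 0 < d"
    using assms(1,3) has_real_derivative_g[of z] by (intro exI[of _ "g' z"]) auto
qed

lemma g_greater_if_g'_neg:
  assumes "-q < x" "x < y" "\<And>z. x < z \<Longrightarrow> z < y \<Longrightarrow> g' z < 0"
  shows "g y < g x"
proof (rule DERIV_neg_imp_decreasing_open[OF assms(2) _ continuous_on_g[OF assms(1)]])
  fix z assume "x < z" "z < y"
  then show "\<exists>d. (g has_real_derivative d) (at z) \<and> d < 0"
    using assms(1,3) has_real_derivative_g[of z] by (intro exI[of _ "g' z"]) auto
qed

lemma tendsto_g_at_top: "(g \<longlongrightarrow> c) at_top"
proof -
  have f: "(f \<longlongrightarrow> 0) at_top"
    using hyperbolic by (simp add: strongly_hyperbolic_def)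
  have shift: "filterlim (\<lambda>x. x + r) at_top at_top" for r :: real
    using filterlim_tendsto_add_at_top[OF tendsto_const[of r] filterlim_ident]
    by (simp add: add.commute)
  have "((\<lambda>x. f (x + r)) \<longlongrightarrow> 0) at_top" for r
    by (rule filterlim_compose[OF f shift])
  then have "((\<lambda>x. A * f (x + p) - B * f (x + q) + c) \<longlongrightarrow> A * 0 - B * 0 + c) at_top"
    by (intro tendsto_intros) auto
  then show ?thesis
    by (simp add: g_def[abs_def])
qed

lemma filterlim_g_at_left_end: "filterlim g at_bot (at_right (-q))"
  unfolding filterlim_at_bot
proof
  fix Z :: real
  have "filterlim f at_top (at_right 0)"
    using hyperbolic by (simp add: strongly_hyperbolic_def)
  then have "eventually (\<lambda>x. (A * f (p - q) + c - Z) / B \<le> f x) (at_right 0)"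
    by (simp add: filterlim_at_top)
  then have "eventually (\<lambda>x. g (x + - q) \<le> Z) (at_right 0)"
    using eventually_at_right_less[of 0]
  proof eventually_elim
    case (elim x)
    have "f (x + p - q) < f (p - q)"
      using strongly_hyperbolic_decreasing[OF hyperbolic] elim(2) shift_less by simp
    then have "A * f (x + p - q) < A * f (p - q)"
      using A_pos by simp
    moreover have "A * f (p - q) + c - Z \<le> B * f x"
      using elim(1) B_pos by (simp add: pos_divide_le_eq mult.commute)
    ultimately show ?case
      by (simp add: g_def algebra_simps)
  qed
  then show "eventually (\<lambda>x. g x \<le> Z) (at_right (-q))"
    using eventually_at_right_to_0[of "\<lambda>x. g x \<le> Z" "-q"] by simp
qed

lemma exists_g_less_near_left_end:
  assumes "-q < u"
  obtains x where "-q < x" "x < u" "g x < M"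
proof -
  have "eventually (\<lambda>x. g x < M) (at_right (-q))"
    using filterlim_g_at_left_end by (simp add: filterlim_at_bot_dense)
  with eventually_at_right_real[OF assms]
  have "eventually (\<lambda>x. x \<in> {-q<..<u} \<and> g x < M) (at_right (-q))"
    by (rule eventually_conj)
  then obtain x where "x \<in> {-q<..<u}" "g x < M"
    using eventually_happens'[OF trivial_limit_at_right_real] by blast
  then show ?thesis
    by (auto intro: that)
qed

lemma g'_neg_after_nonpos:
  assumes "-q < x" "x < y" "g' x \<le> 0"
  shows "g' y < 0"
proof -
  define L where "L t = ln \<bar>deriv f t\<bar>" for t
  have g'_eq: "g' t = B * \<bar>deriv f (t + q)\<bar> - A * \<bar>deriv f (t + p)\<bar>"
    and nonzero: "0 < \<bar>deriv f (t + q)\<bar>" "0 < \<bar>deriv f (t + p)\<bar>" if "-q < t" for t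
    using strongly_hyperbolic_deriv_neg[OF hyperbolic, of "t + q"]
      strongly_hyperbolic_deriv_neg[OF hyperbolic, of "t + p"] that shift_less
    by (auto simp: g'_def)
  have "strictly_convex_on {0<..} L"
    using hyperbolic by (simp add: strongly_hyperbolic_def L_def[abs_def])
  then have "L (x + p) - L (x + q) < L (y + p) - L (y + q)"
    using assms(1,2) shift_less by (intro strictly_convex_on_shifted_difference_less) auto
  moreover have "ln B - ln A \<le> L (x + p) - L (x + q)"
    using assms(1,3) g'_eq[of x] mult_le_mult_iff_ln_diff_le[OF B_pos A_pos nonzero[OF assms(1)]]
    by (simp add: L_def)
  ultimately show ?thesis
    using assms(1,2) g'_eq[of y] mult_less_mult_iff_ln_diff_less[OF B_pos A_pos nonzero[of y]]
    by (simp add: L_def)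
qed

lemma g'_sign_cases:
  obtains (increasing) "\<And>x. -q < x \<Longrightarrow> 0 < g' x"
    | (unimodal) m where "-q < m" "\<And>x. -q < x \<Longrightarrow> x < m \<Longrightarrow> 0 < g' x"
        "\<And>x. m < x \<Longrightarrow> g' x < 0"
proof (cases "\<forall>x>-q. 0 < g' x")
  case True
  then show ?thesis
    using increasing by blast
next
  case False
  define T where "T = {x. -q < x \<and> g' x \<le> 0}"
  have T: "T \<noteq> {}" "bdd_below T"
    using False unfolding T_def by (force, intro bdd_belowI[of _ "-q"]) auto
  define m where "m = Inf T"
  have below: "0 < g' x" if "-q < x" "x < m" for x
    using cInf_lower[OF _ T(2), of x] that by (force simp: T_def m_def)
  have above: "g' x < 0" if "m < x" for x
  proof -
    obtain z where "z \<in> T" "z < x"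
      using \<open>m < x\<close> cInf_less_iff[OF T] by (auto simp: m_def)
    then show ?thesis
      by (auto simp: T_def intro: g'_neg_after_nonpos)
  qed
  have "-q \<le> m"
    unfolding m_def using T(1) by (intro cInf_greatest) (auto simp: T_def)
  moreover have "m \<noteq> -q"
  proof
    assume "m = -q"
    obtain x where "-q < x" "x < -q + 1" "g x < g (-q + 1)"
      using exists_g_less_near_left_end[of "-q + 1"] by auto
    moreover have "g (-q + 1) < g x"
      using calculation above \<open>m = -q\<close> by (intro g_greater_if_g'_neg) auto
    ultimately show False
      by simp
  qed
  ultimately show ?thesis
    using unimodal below above by force
qed

lemma g_greater_limit:
  assumes "-q < x" "\<And>z. x < z \<Longrightarrow> g' z < 0"
  shows "c < g x"
proof -
  have "g y \<le> g (x + 1)" if "x + 1 < y" for y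
    using assms that by (intro less_imp_le g_greater_if_g'_neg) auto
  then have "c \<le> g (x + 1)"
    by (intro tendsto_upperbound[OF tendsto_g_at_top] eventually_mono[OF eventually_gt_at_top]) auto
  also have "g (x + 1) < g x"
    using assms by (intro g_greater_if_g'_neg) auto
  finally show ?thesis .
qed

lemma g_less_limit:
  assumes "-q < x" "\<And>z. x < z \<Longrightarrow> 0 < g' z"
  shows "g x < c"
proof -
  have "g x < g (x + 1)"
    using assms by (intro g_less_if_g'_pos) auto
  also have "g (x + 1) \<le> g y" if "x + 1 < y" for y
    using assms that by (intro less_imp_le g_less_if_g'_pos) auto
  then have "g (x + 1) \<le> c"
    by (intro tendsto_lowerbound[OF tendsto_g_at_top] eventually_mono[OF eventually_gt_at_top]) auto
  finally show ?thesis .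
qed

lemma unique_zero_below:
  assumes "-q < u" "0 < g u" "\<And>x. -q < x \<Longrightarrow> x < u \<Longrightarrow> 0 < g' x"
  obtains x0 where "-q < x0" "x0 < u" "simple_zero g x0"
    "\<And>x. -q < x \<Longrightarrow> x \<le> u \<Longrightarrow> g x = 0 \<Longrightarrow> x = x0"
proof -
  have less: "g x < g y" if "-q < x" "x < y" "y \<le> u" for x y
    using assms(3) that by (intro g_less_if_g'_pos) auto
  obtain x1 where x1: "-q < x1" "x1 < u" "g x1 < 0"
    using exists_g_less_near_left_end[OF assms(1)] by blast
  then obtain x0 where x0: "x1 \<le> x0" "x0 \<le> u" "g x0 = 0"
    using IVT'[of g x1 0 u] continuous_on_g[OF x1(1)] assms(2) by fastforce
  have "x0 < u"
    using x0 assms(2) by (cases "x0 = u") auto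
  have "-q < x0"
    using x0 x1 by simp
  have "simple_zero g x0"
    unfolding simple_zero_def using x0(3) assms(3)[of x0] has_real_derivative_g[of x0]
      \<open>-q < x0\<close> \<open>x0 < u\<close>
    by (intro conjI exI[of _ "g' x0"]) auto
  moreover have "x = x0" if "-q < x" "x \<le> u" "g x = 0" for x
    using less[of x x0] less[of x0 x] that x0 \<open>-q < x0\<close> \<open>x0 < u\<close>
    by (cases x x0 rule: linorder_cases) auto
  ultimately show ?thesis
    using that \<open>-q < x0\<close> \<open>x0 < u\<close> by blast
qed

lemma unique_zero_above:
  assumes "-q < l" "0 < g l" "c < 0" "\<And>x. l < x \<Longrightarrow> g' x < 0"
  obtains x1 where "l < x1" "simple_zero g x1" "\<And>x. l \<le> x \<Longrightarrow> g x = 0 \<Longrightarrow> x = x1"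
proof -
  have greater: "g y < g x" if "l \<le> x" "x < y" for x y
    using assms(1,4) that by (intro g_greater_if_g'_neg) auto
  have "eventually (\<lambda>y. g y < 0) at_top"
    using tendsto_g_at_top assms(3) by (rule order_tendstoD)
  then obtain z where z: "l < z" "g z < 0"
    using eventually_happens'[OF trivial_limit_at_top_linorder]
      eventually_conj[OF eventually_gt_at_top[of l]] by blast
  then obtain x1 where x1: "l \<le> x1" "x1 \<le> z" "g x1 = 0"
    using IVT2'[of g z 0 l] continuous_on_g[OF assms(1)] assms(2) by fastforce
  have "l < x1"
    using x1 assms(2) by (cases "x1 = l") auto
  then have "simple_zero g x1"
    unfolding simple_zero_def using x1(3) assms(1) assms(4)[of x1] has_real_derivative_g[of x1]
    by (intro conjI exI[of _ "g' x1"]) auto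
  moreover have "x = x1" if "l \<le> x" "g x = 0" for x
    using greater[of x x1] greater[of x1 x] that x1 \<open>l < x1\<close>
    by (cases x x1 rule: linorder_cases) auto
  ultimately show ?thesis
    using that \<open>l < x1\<close> by blast
qed

lemma no_zeros_g:
  assumes "A \<le> B" "c \<le> 0"
  shows "{x \<in> {-q<..}. g x = 0} = {}"
proof -
  have "g x < 0" if "-q < x" for x
  proof -
    have "A * f (x + p) \<le> B * f (x + p)"
      using assms(1) strongly_hyperbolic_pos[OF hyperbolic, of "x + p"] that shift_less
      by (intro mult_right_mono) auto
    also have "\<dots> < B * f (x + q)"
      using strongly_hyperbolic_decreasing[OF hyperbolic, of "x + q" "x + p"] that shift_less B_pos
      by simp
    finally show ?thesis
      using assms(2) by (simp add: g_def)
  qed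
  then show ?thesis
    by force
qed

lemma unique_zero_if_positive_from:
  assumes "-q < u" "\<And>x. -q < x \<Longrightarrow> x < u \<Longrightarrow> 0 < g' x" "\<And>x. u \<le> x \<Longrightarrow> 0 < g x"
  shows "\<exists>x0. {x \<in> {-q<..}. g x = 0} = {x0} \<and> simple_zero g x0"
proof -
  obtain x0 where x0: "-q < x0" "simple_zero g x0"
    and unique: "\<And>x. -q < x \<Longrightarrow> x \<le> u \<Longrightarrow> g x = 0 \<Longrightarrow> x = x0"
    using unique_zero_below[OF assms(1) assms(3)[OF order_refl] assms(2)] by blast
  have "x = x0" if "-q < x" "g x = 0" for x
    using unique[of x] assms(3)[of x] that by (cases "x \<le> u") simp_all
  moreover have "g x0 = 0"
    using x0(2) by (simp add: simple_zero_def)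
  ultimately have "{x \<in> {-q<..}. g x = 0} = {x0}"
    using x0(1) by blast
  with x0(2) show ?thesis
    by blast
qed

lemma zeros_g_if_limit_pos:
  assumes "0 < c"
  shows "\<exists>x0. {x \<in> {-q<..}. g x = 0} = {x0} \<and> simple_zero g x0"
proof (cases rule: g'_sign_cases)
  case increasing
  have "eventually (\<lambda>x. 0 < g x \<and> -q < x) at_top"
    using order_tendstoD(1)[OF tendsto_g_at_top assms] eventually_gt_at_top
    by (rule eventually_conj)
  then obtain u where "\<And>x. u \<le> x \<Longrightarrow> 0 < g x \<and> -q < x"
    by (auto simp: eventually_at_top_linorder)
  then show ?thesis
    using increasing by (intro unique_zero_if_positive_from[of u]) auto
next
  case (unimodal m)
  have "0 < g x" if "m \<le> x" for x
  proof -
    have "c < g x"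
      by (rule g_greater_limit) (use unimodal(1) that in \<open>auto intro: unimodal(3)\<close>)
    with assms show ?thesis
      by simp
  qed
  with unimodal(1,2) show ?thesis
    by (rule unique_zero_if_positive_from)
qed

lemma g_less_peak:
  assumes "-q < m" "\<And>x. -q < x \<Longrightarrow> x < m \<Longrightarrow> 0 < g' x" "\<And>x. m < x \<Longrightarrow> g' x < 0"
    and "-q < x" "x \<noteq> m"
  shows "g x < g m"
proof (cases "x < m")
  case True
  show ?thesis
    by (rule g_less_if_g'_pos[OF assms(4) True]) (use assms(4) in \<open>auto intro: assms(2)\<close>)
next
  case False
  with assms(5) have "m < x"
    by simp
  show ?thesis
    by (rule g_greater_if_g'_neg[OF assms(1) \<open>m < x\<close>]) (auto intro: assms(3))
qed

lemma touching_zero_at_peak: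
  assumes "-q < m" "\<And>x. -q < x \<Longrightarrow> x < m \<Longrightarrow> 0 < g' x" "\<And>x. m < x \<Longrightarrow> g' x < 0"
    and "g m = 0"
  shows "{x \<in> {-q<..}. g x = 0} = {m} \<and> touching_zero g m"
proof
  have "x = m" if "-q < x" "g x = 0" for x
    using g_less_peak[OF assms(1-3) that(1)] that(2) assms(4) by (cases "x = m") simp_all
  then show "{x \<in> {-q<..}. g x = 0} = {m}"
    using assms(1,4) by blast
  have "g x < g m" if "\<bar>x - m\<bar> < m + q" "x \<noteq> m" for x
    using that by (intro g_less_peak[OF assms(1-3)]) (auto simp: abs_less_iff)
  moreover have "0 < m + q"
    using assms(1) by simp
  ultimately show "touching_zero g m"
    using touching_zero_if_strict_local_max[OF has_real_derivative_g[OF assms(1)] assms(4)]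
    by blast
qed

lemma two_zeros_around_peak:
  assumes "-q < m" "\<And>x. -q < x \<Longrightarrow> x < m \<Longrightarrow> 0 < g' x" "\<And>x. m < x \<Longrightarrow> g' x < 0"
    and "0 < g m" "c < 0"
  shows "\<exists>x0 x1. x0 \<noteq> x1 \<and> {x \<in> {-q<..}. g x = 0} = {x0, x1}
           \<and> simple_zero g x0 \<and> simple_zero g x1"
proof -
  obtain x0 where x0: "-q < x0" "x0 < m" "simple_zero g x0"
    and unique0: "\<And>x. -q < x \<Longrightarrow> x \<le> m \<Longrightarrow> g x = 0 \<Longrightarrow> x = x0"
    using unique_zero_below[OF assms(1,4,2)] by blast
  obtain x1 where x1: "m < x1" "simple_zero g x1"
    and unique1: "\<And>x. m \<le> x \<Longrightarrow> g x = 0 \<Longrightarrow> x = x1"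
    using unique_zero_above[OF assms(1,4,5,3)] by blast
  have "x = x0 \<or> x = x1" if "-q < x" "g x = 0" for x
    using unique0[of x] unique1[of x] that by (cases "x \<le> m") simp_all
  moreover have "g x0 = 0" "g x1 = 0"
    using x0(3) x1(2) by (simp_all add: simple_zero_def)
  moreover have "-q < x1" "x0 \<noteq> x1"
    using x0(2) x1(1) assms(1) by simp_all
  ultimately have "{x \<in> {-q<..}. g x = 0} = {x0, x1}"
    using x0(1) by blast
  then show ?thesis
    using \<open>x0 \<noteq> x1\<close> x0(3) x1(2) by blast
qed

lemma zeros_g_if_limit_neg:
  assumes "c < 0" "{x \<in> {-q<..}. g x = 0} \<noteq> {}"
  shows "(\<exists>x0 x1. x0 \<noteq> x1 \<and> {x \<in> {-q<..}. g x = 0} = {x0, x1}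
            \<and> simple_zero g x0 \<and> simple_zero g x1)
      \<or> (\<exists>x0. {x \<in> {-q<..}. g x = 0} = {x0} \<and> touching_zero g x0)"
proof -
  obtain y where y: "-q < y" "g y = 0"
    using assms(2) by auto
  show ?thesis
  proof (cases rule: g'_sign_cases)
    case increasing
    have "g y < c"
      by (rule g_less_limit[OF y(1)]) (use y(1) in \<open>auto intro: increasing\<close>)
    with y(2) assms(1) show ?thesis
      by simp
  next
    case (unimodal m)
    have "0 \<le> g m"
      using g_less_peak[OF unimodal y(1)] y(2) by (cases "y = m") auto
    then consider "g m = 0" | "0 < g m"
      by linarith
    then show ?thesis
    proof cases
      case 1
      then show ?thesis
        using touching_zero_at_peak[OF unimodal] by blast
    next
      case 2
      then show ?thesis
        using two_zeros_around_peak[OF unimodal _ assms(1)] by blast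
    qed
  qed
qed

end

definition zero_configuration ::
    "(real \<Rightarrow> real) \<Rightarrow> real set \<Rightarrow> (real \<Rightarrow> real) \<Rightarrow> real set \<Rightarrow> bool" where
  "zero_configuration F I H J \<longleftrightarrow>
     (\<exists>x0 x1. x0 \<noteq> x1 \<and> {x \<in> I. F x = 0} = {x0, x1} \<and> simple_zero F x0 \<and> simple_zero F x1
        \<and> {x \<in> J. H x = 0} = {}) \<or>
     (\<exists>x0. {x \<in> I. F x = 0} = {x0} \<and> touching_zero F x0 \<and> {x \<in> J. H x = 0} = {}) \<or>
     (\<exists>x0 x1. {x \<in> I. F x = 0} = {x0} \<and> simple_zero F x0
        \<and> {x \<in> J. H x = 0} = {x1} \<and> simple_zero H x1)"

lemma zero_configuration_uminus:
  "zero_configuration F I H J \<Longrightarrow> zero_configuration (\<lambda>x. - F x) I (\<lambda>x. - H x) J"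
  unfolding zero_configuration_def neg_equal_0_iff_equal
  by (blast intro: simple_zero_uminus touching_zero_uminus)

lemma zero_configuration_fcheck_fhat_ordered:
  assumes "strongly_hyperbolic f1" "strongly_hyperbolic f2" "0 < a1" "0 < a2" "b2 < b1" "c1 \<noteq> c2"
    and "{x \<in> {max (-b1) (-b2)<..}. fcheck f1 a1 a2 b1 b2 c1 c2 x = 0} \<noteq> {}"
  shows "zero_configuration (fcheck f1 a1 a2 b1 b2 c1 c2) {max (-b1) (-b2)<..}
           (fhat f2 a1 a2 b1 b2 c1 c2) {..<min (-b1) (-b2)}"
proof -
  interpret check: hyperbolic_difference f1 a1 a2 b1 b2 "c1 - c2"
    using assms by unfold_locales
  interpret hat: hyperbolic_difference f2 a2 a1 "- b2" "- b1" "c1 - c2"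
    using assms by unfold_locales auto
  have "fcheck f1 a1 a2 b1 b2 c1 c2 = check.g" "fhat f2 a1 a2 b1 b2 c1 c2 = (\<lambda>x. hat.g (- x))"
    by (simp_all add: fun_eq_iff fcheck_def fhat_def check.g_def hat.g_def)
  moreover have "max (-b1) (-b2) = - b2" "min (-b1) (-b2) = - b1"
    using assms(5) by simp_all
  moreover note zeros_reflect[of b1 hat.g]
  ultimately have reduce: "zero_configuration check.g {- b2<..} (\<lambda>x. hat.g (- x)) {..< - b1}
      \<Longrightarrow> ?thesis" "{x \<in> {- b2<..}. check.g x = 0} \<noteq> {}"
    and hat_zeros: "{x \<in> {..< - b1}. hat.g (- x) = 0} = uminus ` {x \<in> {b1<..}. hat.g x = 0}"
    using assms(7) by simp_all
  show ?thesis
  proof (cases "c2 < c1")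
    case True
    obtain x0 where "{x \<in> {- b2<..}. check.g x = 0} = {x0}" "simple_zero check.g x0"
      using check.zeros_g_if_limit_pos True by auto
    moreover obtain y0 where "{x \<in> {b1<..}. hat.g x = 0} = {y0}" "simple_zero hat.g y0"
      using hat.zeros_g_if_limit_pos True by auto
    ultimately show ?thesis
      using hat_zeros simple_zero_reflect[of hat.g y0]
      by (intro reduce(1)) (auto simp: zero_configuration_def)
  next
    case False
    with assms(6) have "c1 - c2 < 0"
      by simp
    then have "a2 < a1"
      using check.no_zeros_g reduce(2) by (cases "a1 \<le> a2") auto
    then have "{x \<in> {b1<..}. hat.g x = 0} = {}"
      using hat.no_zeros_g \<open>c1 - c2 < 0\<close> by simp
    then show ?thesis
      using check.zeros_g_if_limit_neg[OF \<open>c1 - c2 < 0\<close> reduce(2)] hat_zeros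
      by (intro reduce(1)) (auto simp: zero_configuration_def)
  qed
qed

lemma zero_configuration_fcheck_fhat:
  assumes "strongly_hyperbolic f1" "strongly_hyperbolic f2" "0 < a1" "0 < a2" "b1 \<noteq> b2" "c1 \<noteq> c2"
    and "{x \<in> {max (-b1) (-b2)<..}. fcheck f1 a1 a2 b1 b2 c1 c2 x = 0} \<noteq> {}"
  shows "zero_configuration (fcheck f1 a1 a2 b1 b2 c1 c2) {max (-b1) (-b2)<..}
           (fhat f2 a1 a2 b1 b2 c1 c2) {..<min (-b1) (-b2)}"
proof (cases "b2 < b1")
  case True
  then show ?thesis
    using zero_configuration_fcheck_fhat_ordered assms by blast
next
  case False
  with assms(5) have "b1 < b2"
    by simp
  have swap: "fcheck f1 a1 a2 b1 b2 c1 c2 = (\<lambda>x. - fcheck f1 a2 a1 b2 b1 c2 c1 x)"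
    "fhat f2 a1 a2 b1 b2 c1 c2 = (\<lambda>x. - fhat f2 a2 a1 b2 b1 c2 c1 x)"
    by (simp_all add: fun_eq_iff fcheck_def fhat_def)
  have "zero_configuration (fcheck f1 a2 a1 b2 b1 c2 c1) {max (-b2) (-b1)<..}
      (fhat f2 a2 a1 b2 b1 c2 c1) {..<min (-b2) (-b1)}"
    using assms(7) \<open>b1 < b2\<close> assms(1-4,6)
    by (intro zero_configuration_fcheck_fhat_ordered) (auto simp: swap max.commute)
  from zero_configuration_uminus[OF this] show ?thesis
    by (simp add: swap max.commute min.commute)
qed

lemma zero_configuration_imp_sign_cases:
  assumes "zero_configuration F I H J"
  shows "(\<exists>x0 x1. x0 \<noteq> x1 \<and> {x \<in> I. F x = 0} = {x0, x1}
            \<and> changes_sign_at F x0 \<and> changes_sign_at F x1 \<and> {x \<in> J. H x = 0} = {}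
            \<and> deriv F x0 \<noteq> 0 \<and> deriv F x1 \<noteq> 0)
      \<or> (\<exists>x0. {x \<in> I. F x = 0} = {x0} \<and> keeps_sign_at F x0 \<and> {x \<in> J. H x = 0} = {}
            \<and> deriv F x0 = 0)
      \<or> (\<exists>x0 x1. {x \<in> I. F x = 0} = {x0} \<and> changes_sign_at F x0
            \<and> {x \<in> J. H x = 0} = {x1} \<and> changes_sign_at H x1
            \<and> deriv F x0 \<noteq> 0 \<and> deriv H x1 \<noteq> 0)"
  using assms unfolding zero_configuration_def
proof (elim disjE exE conjE)
  fix x0 x1
  assume "x0 \<noteq> x1" "{x \<in> I. F x = 0} = {x0, x1}" "simple_zero F x0" "simple_zero F x1"
    "{x \<in> J. H x = 0} = {}"
  then show ?thesis
    using simple_zero_changes_sign simple_zero_deriv_nonzero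
    by (intro disjI1 exI[of _ x0] exI[of _ x1]) simp
next
  fix x0
  assume "{x \<in> I. F x = 0} = {x0}" "touching_zero F x0" "{x \<in> J. H x = 0} = {}"
  then show ?thesis
    using touching_zero_deriv_eq_0
    by (intro disjI2 disjI1 exI[of _ x0]) (simp add: touching_zero_def)
next
  fix x0 x1
  assume "{x \<in> I. F x = 0} = {x0}" "simple_zero F x0" "{x \<in> J. H x = 0} = {x1}" "simple_zero H x1"
  then show ?thesis
    using simple_zero_changes_sign simple_zero_deriv_nonzero
    by (intro disjI2 exI[of _ x0] exI[of _ x1]) simp
qed

theorem lemma3p7:
  fixes f1 f2 :: "real \<Rightarrow> real" and a1 a2 b1 b2 c1 c2 :: real
  assumes "strongly_hyperbolic f1" and "strongly_hyperbolic f2"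
    and "a1 > 0" and "a2 > 0"
    and "b1 \<noteq> b2" and "c1 \<noteq> c2"
    and "fcheck_roots f1 a1 a2 b1 b2 c1 c2 \<noteq> {}"
  defines "P1 \<equiv> (\<exists>x0 x1. x0 \<noteq> x1 \<and> fcheck_roots f1 a1 a2 b1 b2 c1 c2 = {x0, x1}
              \<and> changes_sign_at (fcheck f1 a1 a2 b1 b2 c1 c2) x0
              \<and> changes_sign_at (fcheck f1 a1 a2 b1 b2 c1 c2) x1
              \<and> fhat_roots f2 a1 a2 b1 b2 c1 c2 = {}
              \<and> deriv (fcheck f1 a1 a2 b1 b2 c1 c2) x0 \<noteq> 0
              \<and> deriv (fcheck f1 a1 a2 b1 b2 c1 c2) x1 \<noteq> 0)"
    and "P2 \<equiv> (\<exists>x0. fcheck_roots f1 a1 a2 b1 b2 c1 c2 = {x0}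
              \<and> keeps_sign_at (fcheck f1 a1 a2 b1 b2 c1 c2) x0
              \<and> fhat_roots f2 a1 a2 b1 b2 c1 c2 = {}
              \<and> deriv (fcheck f1 a1 a2 b1 b2 c1 c2) x0 = 0)"
    and "P3 \<equiv> (\<exists>x0 x1. fcheck_roots f1 a1 a2 b1 b2 c1 c2 = {x0}
              \<and> changes_sign_at (fcheck f1 a1 a2 b1 b2 c1 c2) x0
              \<and> fhat_roots f2 a1 a2 b1 b2 c1 c2 = {x1}
              \<and> changes_sign_at (fhat f2 a1 a2 b1 b2 c1 c2) x1
              \<and> deriv (fcheck f1 a1 a2 b1 b2 c1 c2) x0 \<noteq> 0
              \<and> deriv (fhat f2 a1 a2 b1 b2 c1 c2) x1 \<noteq> 0)"
  shows "(P1 \<and> \<not> P2 \<and> \<not> P3) \<or> (\<not> P1 \<and> P2 \<and> \<not> P3) \<or> (\<not> P1 \<and> \<not> P2 \<and> P3)"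
proof -
  have check_roots: "fcheck_roots f1 a1 a2 b1 b2 c1 c2
      = {x \<in> {max (-b1) (-b2)<..}. fcheck f1 a1 a2 b1 b2 c1 c2 x = 0}"
    and hat_roots: "fhat_roots f2 a1 a2 b1 b2 c1 c2
      = {x \<in> {..<min (-b1) (-b2)}. fhat f2 a1 a2 b1 b2 c1 c2 x = 0}"
    by (auto simp: fcheck_roots_def fhat_roots_def)
  have "zero_configuration (fcheck f1 a1 a2 b1 b2 c1 c2) {max (-b1) (-b2)<..}
      (fhat f2 a1 a2 b1 b2 c1 c2) {..<min (-b1) (-b2)}"
    using zero_configuration_fcheck_fhat[OF assms(1-6)] assms(7) check_roots by simp
  then have "P1 \<or> P2 \<or> P3"
    unfolding assms(8-10) check_roots hat_roots by (rule zero_configuration_imp_sign_cases)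
  moreover have "\<not> (P1 \<and> P2)" "\<not> (P1 \<and> P3)"
    unfolding assms(8-10) by (metis doubleton_eq_iff insert_absorb2)+
  moreover have "\<not> (P2 \<and> P3)"
    unfolding assms(9,10) by auto
  ultimately show ?thesis
    by blast
qed

end
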